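(* Let $G$ be a symmetric game with BK type spaces $T_1,\ldots,T_n$ and maps $f_i:T_i\to\mathcal{N}_\omega(U_{-i})$ as described in the context, and suppose there is exactly one superrationally justifiable action. If for each player $i$ the state $(a_i,t_i)$ of player $i$ lies in $\mathcal{SR}^i$, then the action profile $(a_1,\ldots,a_n)$ is a superrational profile.
   Context: A game $G=\langle I,\{A_i\},\{\pi_i\}\rangle$ has players $I=\{1,\ldots,n\}$, finite action sets $A_i$ and payoffs $\pi_i:\prod_i A_i\to\mathbb{R}$. It is symmetric if $A_i=A_j$ for all $i,j$ and $\pi_i(a_1,\ldots,a_n)=\pi_{\tau^{-1}(i)}(a_{\tau(1)},\ldots,a_{\tau(n)})$ for every permutation $\tau$ of $I$, every profile and every $i$. An action $a^*$ is superrationally justifiable if $\pi_i(a^*,\ldots,a^* )\ge\pi_i(b,\ldots,b)$ for every $i$ and every action $b$; the profile $(a^*,\ldots,a^* )$ is then a superrational profile. Each player $i$ has a type set $T_i$; let $U_{-i}=\prod_{j\ne i}(A_j\times T_j)$ and $f_i:T_i\to\mathcal{N}_\omega(U_{-i})$, where $\mathcal{N}_\omega(X)$ is the set of finite nonempty subsets of $X$. The state of player $i$ is a pair $(a_i,t_i)\in A_i\times T_i$. An identification relation is an equivalence relation $R$ on $\bigcup_{i\in I}T_i$ such that for all $i,j\in I$, if $t_iRt_j$ (with $t_i\in T_i$, $t_j\in T_j$) then there is a permutation $\tau$ of $I$ with $\tau(i)=j$ such that for every $((a_k,u_k))_{k\ne i}\in f_i(t_i)$ there is $((b_l,v_l))_{l\ne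 j}\in f_j(t_j)$ with $a_k=b_{\tau(k)}$ and $u_kRv_{\tau(k)}$ for all $k\ne i$. The state $(a,t_i)$ of player $i$ is in $\mathcal{SR}^i$ (a superrational state) iff $f_i(t_i)$ is a singleton $\{((a,t_j))_{j\ne i}\}$ for some types $t_j\in T_j$, where $a$ is superrationally justifiable, and there exists an identification relation $R$ with $t_jRt_i$ for all $j\ne i$. *)

theory Defs
  imports Complex_Main "HOL-Library.FuncSet" "HOL-Combinatorics.Permutations"
begin

abbreviation players :: "nat \<Rightarrow> nat set" where
  "players n \<equiv> {1..n}"

definition symmetric_game ::
  "nat \<Rightarrow> (nat \<Rightarrow> 'a set) \<Rightarrow> (nat \<Rightarrow> (nat \<Rightarrow> 'a) \<Rightarrow> real) \<Rightarrow> bool" where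
  "symmetric_game n A \<pi> \<longleftrightarrow>
     (\<forall>i\<in>players n. finite (A i)) \<and>
     (\<forall>i\<in>players n. \<forall>j\<in>players n. A i = A j) \<and>
     (\<forall>\<tau>. \<tau> permutes players n \<longrightarrow>
        (\<forall>a\<in>PiE (players n) A. \<forall>i\<in>players n. \<pi> i a = \<pi> (inv \<tau> i) (a \<circ> \<tau>)))"

definition diag_profile :: "nat \<Rightarrow> 'a \<Rightarrow> (nat \<Rightarrow> 'a)" where
  "diag_profile n a = (\<lambda>k\<in>players n. a)"

definition superrationally_justifiable ::
  "nat \<Rightarrow> (nat \<Rightarrow> 'a set) \<Rightarrow> (nat \<Rightarrow> (nat \<Rightarrow> 'a) \<Rightarrow> real) \<Rightarrow> 'a \<Rightarrow> bool" where
  "superrationally_justifiable n A \<pi> a \<longleftrightarrow>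
     (\<forall>i\<in>players n. a \<in> A i) \<and>
     (\<forall>i\<in>players n. \<forall>b. (\<forall>j\<in>players n. b \<in> A j) \<longrightarrow>
        \<pi> i (diag_profile n a) \<ge> \<pi> i (diag_profile n b))"

definition superrational_profile ::
  "nat \<Rightarrow> (nat \<Rightarrow> 'a set) \<Rightarrow> (nat \<Rightarrow> (nat \<Rightarrow> 'a) \<Rightarrow> real) \<Rightarrow> (nat \<Rightarrow> 'a) \<Rightarrow> bool" where
  "superrational_profile n A \<pi> p \<longleftrightarrow>
     (\<exists>a. superrationally_justifiable n A \<pi> a \<and> p = diag_profile n a)"

definition U_minus :: "nat \<Rightarrow> (nat \<Rightarrow> 'a set) \<Rightarrow> (nat \<Rightarrow> 't set) \<Rightarrow> nat \<Rightarrow> (nat \<Rightarrow> 'a \<times> 't) set" where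
  "U_minus n A T i = PiE (players n - {i}) (\<lambda>k. A k \<times> T k)"

definition type_structure ::
  "nat \<Rightarrow> (nat \<Rightarrow> 'a set) \<Rightarrow> (nat \<Rightarrow> 't set) \<Rightarrow> (nat \<Rightarrow> 't \<Rightarrow> (nat \<Rightarrow> 'a \<times> 't) set) \<Rightarrow> bool" where
  "type_structure n A T f \<longleftrightarrow>
     (\<forall>i\<in>players n. \<forall>t\<in>T i. finite (f i t) \<and> f i t \<noteq> {} \<and> f i t \<subseteq> U_minus n A T i)"

definition identification_relation ::
  "nat \<Rightarrow> (nat \<Rightarrow> 't set) \<Rightarrow> (nat \<Rightarrow> 't \<Rightarrow> (nat \<Rightarrow> 'a \<times> 't) set) \<Rightarrow> ('t \<times> 't) set \<Rightarrow> bool" where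
  "identification_relation n T f R \<longleftrightarrow>
     equiv (\<Union>k\<in>players n. T k) R \<and>
     (\<forall>i\<in>players n. \<forall>j\<in>players n. \<forall>ti\<in>T i. \<forall>tj\<in>T j. (ti, tj) \<in> R \<longrightarrow>
        (\<exists>\<tau>. \<tau> permutes players n \<and> \<tau> i = j \<and>
           (\<forall>u\<in>f i ti. \<exists>v\<in>f j tj. \<forall>k\<in>players n - {i}.
               fst (u k) = fst (v (\<tau> k)) \<and> (snd (u k), snd (v (\<tau> k))) \<in> R)))"

definition superrational_state ::
  "nat \<Rightarrow> (nat \<Rightarrow> 'a set) \<Rightarrow> (nat \<Rightarrow> (nat \<Rightarrow> 'a) \<Rightarrow> real) \<Rightarrow> (nat \<Rightarrow> 't set)
   \<Rightarrow> (nat \<Rightarrow> 't \<Rightarrow> (nat \<Rightarrow> 'a \<times> 't) set) \<Rightarrow> nat \<Rightarrow> 'a \<Rightarrow> 't \<Rightarrow> bool" where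
  "superrational_state n A \<pi> T f i a ti \<longleftrightarrow>
     superrationally_justifiable n A \<pi> a \<and>
     (\<exists>ts. (\<forall>j\<in>players n - {i}. ts j \<in> T j) \<and>
        f i ti = {(\<lambda>j\<in>players n - {i}. (a, ts j))} \<and>
        (\<exists>R. identification_relation n T f R \<and>
             (\<forall>j\<in>players n - {i}. (ts j, ti) \<in> R)))"

end

theory Submission
  imports Defs
begin

text \<open>The action of a superrational state is superrationally justifiable by definition; when
  only one action is justifiable, all players therefore play that same action, and the
  resulting diagonal profile is superrational.\<close>

lemma superrational_state_justifiable:
  "superrational_state n A \<pi> T f i a ti \<Longrightarrow> superrationally_justifiable n A \<pi> a"
  unfolding superrational_state_def by blast

lemma superrational_profile_if_constant:
  assumes "superrationally_justifiable n A \<pi> b"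
    and "\<forall>i\<in>players n. a i = b"
  shows "superrational_profile n A \<pi> (\<lambda>i\<in>players n. a i)"
proof -
  have "(\<lambda>i\<in>players n. a i) = diag_profile n b"
    using assms(2) unfolding diag_profile_def by (intro restrict_ext) simp
  then show ?thesis
    using assms(1) unfolding superrational_profile_def by blast
qed

theorem theorem4:
  fixes n :: nat
    and A :: "nat \<Rightarrow> 'a set"
    and \<pi> :: "nat \<Rightarrow> (nat \<Rightarrow> 'a) \<Rightarrow> real"
    and T :: "nat \<Rightarrow> 't set"
    and f :: "nat \<Rightarrow> 't \<Rightarrow> (nat \<Rightarrow> 'a \<times> 't) set"
    and a :: "nat \<Rightarrow> 'a"
    and t :: "nat \<Rightarrow> 't"
  assumes "symmetric_game n A \<pi>"
    and "type_structure n A T f"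
    and "\<exists>!b. superrationally_justifiable n A \<pi> b"
    and "\<forall>i\<in>players n. a i \<in> A i \<and> t i \<in> T i"
    and "\<forall>i\<in>players n. superrational_state n A \<pi> T f i (a i) (t i)"
  shows "superrational_profile n A \<pi> (\<lambda>i\<in>players n. a i)"
proof -
  obtain b where b: "superrationally_justifiable n A \<pi> b"
    and unique: "\<And>c. superrationally_justifiable n A \<pi> c \<Longrightarrow> c = b"
    using assms(3) by blast
  have "\<forall>i\<in>players n. a i = b"
    using assms(5) by (blast dest: superrational_state_justifiable unique)
  then show ?thesis
    using b by (rule superrational_profile_if_constant[rotated])
qed

end
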